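(* Let $r \in \mathbb{Q}_{>0}$ be such that $S_r$ is atomic. (1) If $r < 1$, then for every $x \in S_r$ with $|\mathsf{Z}(x)| > 1$, $\mathsf{L}(x) = \{\min \mathsf{L}(x) + k(\mathsf{d}(r) - \mathsf{n}(r)) : k \in \mathbb{N}_0\}$. (2) If $r \in \mathbb{N}$, then $|\mathsf{Z}(x)| = |\mathsf{L}(x)| = 1$ for all $x \in S_r$. (3) If $r \in \mathbb{Q}_{>1} \setminus \mathbb{N}$, then for every $x \in S_r$ with $|\mathsf{Z}(x)| > 1$, $\mathsf{L}(x) = \{\min \mathsf{L}(x) + k(\mathsf{n}(r) - \mathsf{d}(r)) : 0 \le k \le \frac{\max \mathsf{L}(x) - \min \mathsf{L}(x)}{\mathsf{n}(r) - \mathsf{d}(r)}\}$. In particular, for every $x \in S_r$, $\mathsf{L}(x)$ is an arithmetic progression with difference $|\mathsf{n}(r) - \mathsf{d}(r)|$.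
   Context: For $q \in \mathbb{Q}_{>0}$, $\mathsf{n}(q)$ and $\mathsf{d}(q)$ denote the unique positive coprime integers with $q = \mathsf{n}(q)/\mathsf{d}(q)$. For $r \in \mathbb{Q}_{>0}$, $S_r$ is the additive submonoid of $(\mathbb{Q}_{\ge 0},+)$ generated by $\{r^n : n \in \mathbb{N}_0\}$; it is atomic exactly when $r=1$ or $\mathsf{n}(r)>1$. If $r \in \mathbb{N}$ then $S_r = \mathbb{N}_0$ with unique atom $1$; if $r \notin \mathbb{N}$ and $S_r$ is atomic, its atoms are the pairwise distinct elements $r^n$, $n \in \mathbb{N}_0$. A factorization of $x$ is a formal finite sum of atoms (with multiplicities) whose value is $x$; $\mathsf{Z}(x)$ is the set of factorizations of $x$, $|z|$ is the number of atoms in $z$ counted with multiplicity, and $\mathsf{L}(x) = \{|z| : z \in \mathsf{Z}(x)\}$. *)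

theory Defs
  imports Complex_Main "HOL-Library.Multiset"
begin

definition numr :: "rat \<Rightarrow> int" where "numr q = fst (quotient_of q)"
definition denr :: "rat \<Rightarrow> int" where "denr q = snd (quotient_of q)"

definition Sr :: "rat \<Rightarrow> rat set" where
  "Sr r = {x. \<exists>m :: nat multiset. x = sum_mset (image_mset (\<lambda>n. r ^ n) m)}"

definition atoms :: "rat set \<Rightarrow> rat set" where
  "atoms S = {a \<in> S. a \<noteq> 0 \<and> (\<forall>b\<in>S. \<forall>c\<in>S. a = b + c \<longrightarrow> b = 0 \<or> c = 0)}"

definition Zf :: "rat set \<Rightarrow> rat \<Rightarrow> rat multiset set" where
  "Zf S x = {z. set_mset z \<subseteq> atoms S \<and> sum_mset z = x}"

definition Lf :: "rat set \<Rightarrow> rat \<Rightarrow> nat set" where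
  "Lf S x = size ` Zf S x"

definition atomic :: "rat set \<Rightarrow> bool" where
  "atomic S \<longleftrightarrow> (\<forall>x\<in>S. x \<noteq> 0 \<longrightarrow> Zf S x \<noteq> {})"

definition arith_prog :: "int set \<Rightarrow> int \<Rightarrow> bool" where
  "arith_prog A d \<longleftrightarrow> (\<exists>a. (\<exists>N::nat. A = {a + int i * d | i. i < N}) \<or> A = {a + int i * d | i. True})"

end

theory Submission
  imports Defs "HOL-Number_Theory.Cong"
begin

text \<open>
  Write \<open>r = N / D\<close> in lowest terms and encode a factorization by the multiset of its exponents.
  Trading \<open>N\<close> copies of \<open>r ^ j\<close> for \<open>D\<close> copies of \<open>r ^ (j + 1)\<close> (a carry), or back (a borrow),
  preserves the value and changes the length by \<open>D - N\<close>. Conversely, multiplying an equation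
  between two factorizations by a power of \<open>D\<close> yields an integer identity in which \<open>N \<equiv> D\<close>
  modulo \<open>N - D\<close>, so all lengths of \<open>x\<close> are congruent modulo \<open>N - D\<close>; read as a mixed-radix
  expansion, the same identity shows that a factorization admitting no carry (respectively no
  borrow) is determined by its value.

  For \<open>r < 1\<close> the shortest factorization admits no borrow; if another factorization exists,
  borrowing from one that admits a borrow ends in the shortest one with a carry available, and
  iterated carries realise every length \<open>min L + k (D - N)\<close>. For \<open>r > 1\<close> the shortest
  factorization admits no carry, and carrying from the longest one down to it passes through
  every length of the progression between them. For integral \<open>r\<close> the monoid is \<open>\<nat>\<close>, with the
  single atom \<open>1\<close>.
\<close>

section \<open>Sums of powers of a rational\<close>

definition pow_sum :: "rat \<Rightarrow> nat multiset \<Rightarrow> rat" where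
  "pow_sum r m = (\<Sum>i\<in>#m. r ^ i)"

lemma pow_sum_empty [simp]: "pow_sum r {#} = 0"
  by (simp add: pow_sum_def)

lemma pow_sum_add_mset [simp]: "pow_sum r (add_mset i m) = r ^ i + pow_sum r m"
  by (simp add: pow_sum_def)

lemma pow_sum_union [simp]: "pow_sum r (m1 + m2) = pow_sum r m1 + pow_sum r m2"
  by (simp add: pow_sum_def)

lemma pow_sum_replicate [simp]: "pow_sum r (replicate_mset k i) = of_nat k * r ^ i"
  by (simp add: pow_sum_def)

lemma pow_sum_nonneg: "0 < r \<Longrightarrow> 0 \<le> pow_sum r m"
  by (induction m) auto

lemma pow_sum_eq_0_iff: "0 < r \<Longrightarrow> pow_sum r m = 0 \<longleftrightarrow> m = {#}"
  by (induction m) (simp_all add: add_nonneg_eq_0_iff pow_sum_nonneg)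

lemma power_less_pow_sum:
  assumes "0 < r" "i \<in># m" "2 \<le> size m"
  shows "r ^ i < pow_sum r m"
proof -
  obtain m' where m': "m = add_mset i m'"
    using assms(2) by (metis multi_member_split)
  then have "m' \<noteq> {#}"
    using assms(3) by auto
  then have "0 < pow_sum r m'"
    using pow_sum_nonneg[OF assms(1)] pow_sum_eq_0_iff[OF assms(1)] by (metis order_le_less)
  then show ?thesis
    using m' by simp
qed

lemma size_le_pow_sum: "1 \<le> r \<Longrightarrow> of_nat (size m) \<le> pow_sum r m"
  by (induction m) (auto simp: add_mono one_le_power)

lemma pow_sum_exchange:
  assumes "A \<subseteq># m" "pow_sum r A = pow_sum r B"
  shows "pow_sum r (m - A + B) = pow_sum r m"
  using assms by (metis pow_sum_union subset_mset.diff_add)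

definition carry :: "nat \<Rightarrow> nat \<Rightarrow> nat \<Rightarrow> nat multiset \<Rightarrow> nat multiset" where
  "carry N D j m = m - replicate_mset N j + replicate_mset D (Suc j)"

definition borrow :: "nat \<Rightarrow> nat \<Rightarrow> nat \<Rightarrow> nat multiset \<Rightarrow> nat multiset" where
  "borrow N D j m = m - replicate_mset D (Suc j) + replicate_mset N j"

lemma
  assumes "0 < D" "r = of_nat N / of_nat D" "N \<le> count m j"
  shows pow_sum_carry: "pow_sum r (carry N D j m) = pow_sum r m"
    and size_carry: "size (carry N D j m) + N = size m + D"
    and count_carry: "D \<le> count (carry N D j m) (Suc j)"
proof -
  have sub: "replicate_mset N j \<subseteq># m"
    using assms(3) by (simp add: subseteq_mset_def)
  then show "pow_sum r (carry N D j m) = pow_sum r m"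
    unfolding carry_def using assms(1,2) by (intro pow_sum_exchange) simp_all
  show "size (carry N D j m) + N = size m + D"
    unfolding carry_def using size_mset_mono[OF sub] by (simp add: size_Diff_submset[OF sub])
qed (simp add: carry_def)

lemma
  assumes "0 < D" "r = of_nat N / of_nat D" "D \<le> count m (Suc j)"
  shows pow_sum_borrow: "pow_sum r (borrow N D j m) = pow_sum r m"
    and size_borrow: "size (borrow N D j m) + D = size m + N"
    and count_borrow: "N \<le> count (borrow N D j m) j"
proof -
  have sub: "replicate_mset D (Suc j) \<subseteq># m"
    using assms(3) by (simp add: subseteq_mset_def)
  then show "pow_sum r (borrow N D j m) = pow_sum r m"
    unfolding borrow_def using assms(1,2) by (intro pow_sum_exchange) simp_all
  show "size (borrow N D j m) + D = size m + N"
    unfolding borrow_def using size_mset_mono[OF sub] by (simp add: size_Diff_submset[OF sub])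
qed (simp add: borrow_def)

lemma Sr_eq_range_pow_sum: "Sr r = range (pow_sum r)"
  by (auto simp: Sr_def pow_sum_def)

lemma pow_sum_in_Sr [simp]: "pow_sum r m \<in> Sr r"
  unfolding Sr_eq_range_pow_sum by (rule rangeI)

lemma power_in_Sr: "r ^ i \<in> Sr r"
  unfolding Sr_eq_range_pow_sum by (rule range_eqI[of _ _ "{#i#}"]) simp

section \<open>Clearing denominators\<close>

lemma dvd_sum_mset_image:
  fixes f :: "'a \<Rightarrow> 'b::comm_semiring_1"
  shows "(\<And>x. x \<in># m \<Longrightarrow> a dvd f x) \<Longrightarrow> a dvd (\<Sum>x\<in>#m. f x)"
  by (induction m) auto

lemma bounded_mset: obtains K :: nat where "set_mset m1 \<subseteq> {..K}" "set_mset m2 \<subseteq> {..K}"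
  using finite_nat_set_iff_bounded_le[of "set_mset (m1 + m2)"] by auto

definition cleared_sum :: "int \<Rightarrow> int \<Rightarrow> nat \<Rightarrow> nat multiset \<Rightarrow> int" where
  "cleared_sum n d K m = (\<Sum>i\<in>#m. n ^ i * d ^ (K - i))"

lemma of_int_cleared_sum:
  assumes "d \<noteq> 0" "r = of_int n / of_int d" "set_mset m \<subseteq> {..K}"
  shows "of_int (cleared_sum n d K m) = of_int d ^ K * pow_sum r m"
  using assms(3)
proof (induction m)
  case (add i m)
  have "of_int d ^ K * r ^ i = of_int d ^ i * r ^ i * of_int d ^ (K - i)"
    using add.prems by (simp add: power_add[symmetric])
  also have "\<dots> = of_int n ^ i * of_int d ^ (K - i)"
    using assms(1,2) by (simp add: power_divide)
  finally show ?case
    using add by (simp add: cleared_sum_def distrib_left)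
qed (simp add: cleared_sum_def)

lemma cleared_sum_eq:
  assumes "d \<noteq> 0" "r = of_int n / of_int d" "pow_sum r m1 = pow_sum r m2"
    "set_mset m1 \<subseteq> {..K}" "set_mset m2 \<subseteq> {..K}"
  shows "cleared_sum n d K m1 = cleared_sum n d K m2"
  using of_int_cleared_sum[OF assms(1,2,4)] of_int_cleared_sum[OF assms(1,2,5)] assms(3)
  by (metis of_int_eq_iff)

lemma cleared_sum_cong:
  assumes "set_mset m \<subseteq> {..K}"
  shows "[cleared_sum n d K m = int (size m) * n ^ K] (mod (n - d))"
  using assms
proof (induction m)
  case (add i m)
  have "[d = n] (mod (n - d))"
    by (metis cong_iff_dvd_diff dvd_minus_iff dvd_refl minus_diff_eq)
  then have "[n ^ i * d ^ (K - i) = n ^ i * n ^ (K - i)] (mod (n - d))"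
    by (intro cong_mult cong_refl cong_pow)
  also have "n ^ i * n ^ (K - i) = n ^ K"
    using add.prems by (simp add: power_add[symmetric])
  finally show ?case
    using add by (auto simp: cleared_sum_def algebra_simps intro: cong_add)
qed (simp add: cleared_sum_def)

lemma pow_sum_eq_imp_size_cong:
  assumes "0 < D" "coprime N D" "r = of_nat N / of_nat D" "pow_sum r m1 = pow_sum r m2"
  shows "[int (size m1) = int (size m2)] (mod (int N - int D))"
proof -
  obtain K where K: "set_mset m1 \<subseteq> {..K}" "set_mset m2 \<subseteq> {..K}"
    by (rule bounded_mset)
  have "cleared_sum (int N) (int D) K m1 = cleared_sum (int N) (int D) K m2"
    using assms K by (intro cleared_sum_eq) auto
  then have "[int (size m1) * int N ^ K = int (size m2) * int N ^ K] (mod (int N - int D))"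
    using cleared_sum_cong[OF K(1)] cleared_sum_cong[OF K(2)] by (metis cong_sym cong_trans)
  moreover have "coprime (int N - int D) (int N)"
    using assms(2) gcd_diff2[of "int N" "int D"]
    by (simp add: coprime_iff_gcd_eq_1 gcd.commute flip: coprime_int_iff)
  ultimately show ?thesis
    by (simp add: cong_mult_rcancel coprime_commute)
qed

lemma cleared_sum_eq_sum_count:
  assumes "set_mset m \<subseteq> {..K}"
  shows "cleared_sum n d K m = (\<Sum>i\<le>K. int (count m i) * n ^ i * d ^ (K - i))"
  using assms
proof (induction m)
  case (add j m)
  have "(\<Sum>i\<le>K. int (count (add_mset j m) i) * n ^ i * d ^ (K - i))
      = (\<Sum>i\<le>K. int (count m i) * n ^ i * d ^ (K - i) + (if i = j then n ^ i * d ^ (K - i) else 0))"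
    by (intro sum.cong) (simp_all add: distrib_right)
  also have "\<dots> = (\<Sum>i\<le>K. int (count m i) * n ^ i * d ^ (K - i)) + n ^ j * d ^ (K - j)"
    using add.prems by (simp add: sum.distrib)
  finally show ?case
    using add by (simp add: cleared_sum_def)
qed (simp add: cleared_sum_def)

lemma weighted_digits_eq_0:
  fixes c :: "nat \<Rightarrow> int"
  assumes "0 < n" "coprime n d" "\<forall>i<K. \<bar>c i\<bar> < n"
    "(\<Sum>i\<le>K. c i * n ^ i * d ^ (K - i)) = 0"
  shows "\<forall>i\<le>K. c i = 0"
  using assms(3,4)
proof (induction K arbitrary: c)
  case (Suc K)
  let ?s = "\<Sum>i\<le>K. c (Suc i) * n ^ i * d ^ (K - i)"
  have "(\<Sum>i\<le>K. c (Suc i) * n ^ Suc i * d ^ (Suc K - Suc i)) = n * ?s"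
    by (simp add: sum_distrib_left mult_ac)
  then have "(\<Sum>i\<le>Suc K. c i * n ^ i * d ^ (Suc K - i)) = c 0 * d ^ Suc K + n * ?s"
    by (simp only: sum.atMost_Suc_shift) simp
  then have eq: "c 0 * d ^ Suc K = n * - ?s"
    using Suc.prems(2) by simp
  then have "n dvd c 0 * d ^ Suc K"
    by simp
  then have "n dvd c 0"
    using assms(2) by (simp add: coprime_dvd_mult_left_iff)
  then have c0: "c 0 = 0"
    using Suc.prems(1) dvd_imp_le_int[of "c 0" n] by fastforce
  then have "?s = 0"
    using eq assms(1) by simp
  moreover have "\<forall>i<K. \<bar>c (Suc i)\<bar> < n"
    using Suc.prems(1) by blast
  ultimately have "\<forall>i\<le>K. c (Suc i) = 0"
    by (rule Suc.IH[rotated])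
  with c0 show ?case
    by (metis Suc_le_mono not0_implies_Suc)
qed (simp add: atMost_0)

lemma weighted_digits_eq_0_rev:
  fixes c :: "nat \<Rightarrow> int"
  assumes "0 < d" "coprime n d" "\<forall>i>0. \<bar>c i\<bar> < d"
    "(\<Sum>i\<le>K. c i * n ^ i * d ^ (K - i)) = 0"
  shows "\<forall>i\<le>K. c i = 0"
proof -
  \<comment> \<open>reflecting the index, \<open>i \<mapsto> K - i\<close>, swaps the roles of \<open>n\<close> and \<open>d\<close>\<close>
  have "(\<Sum>i\<le>K. c (K - i) * d ^ i * n ^ (K - i)) = (\<Sum>i\<le>K. c i * n ^ i * d ^ (K - i))"
    using sum.atLeastAtMost_rev[of "\<lambda>i. c i * n ^ i * d ^ (K - i)" 0 K]
    by (simp add: atLeast0AtMost algebra_simps)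
  then have "\<forall>i\<le>K. c (K - i) = 0"
    using weighted_digits_eq_0[of d n K "\<lambda>i. c (K - i)"] assms by (simp add: coprime_commute)
  then show ?thesis
    by (metis diff_diff_cancel diff_le_self)
qed

lemma pow_sum_eq_imp_digits_eq_0:
  assumes "0 < D" "r = of_nat N / of_nat D" "pow_sum r m1 = pow_sum r m2"
    "set_mset m1 \<subseteq> {..K}" "set_mset m2 \<subseteq> {..K}"
  shows "(\<Sum>i\<le>K. (int (count m1 i) - int (count m2 i)) * int N ^ i * int D ^ (K - i)) = 0"
proof -
  have "cleared_sum (int N) (int D) K m1 = cleared_sum (int N) (int D) K m2"
    using assms by (intro cleared_sum_eq) auto
  then show ?thesis
    using assms(4,5) by (simp add: cleared_sum_eq_sum_count left_diff_distrib sum_subtractf)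
qed

lemma mset_eq_if_count_eq_atMost:
  assumes "set_mset m1 \<subseteq> {..K}" "set_mset m2 \<subseteq> {..K}" "\<forall>i\<le>K. count m1 i = count m2 i"
  shows "m1 = m2"
proof (rule multiset_eqI)
  fix i
  show "count m1 i = count m2 i"
  proof (cases "i \<le> K")
    case False
    then have "i \<notin># m1" "i \<notin># m2"
      using assms(1,2) by auto
    then show ?thesis
      by (simp add: not_in_iff)
  qed (use assms(3) in simp)
qed

lemma carry_free_unique:
  assumes "0 < N" "0 < D" "coprime N D" "r = of_nat N / of_nat D" "pow_sum r m1 = pow_sum r m2"
    "\<forall>i. count m1 i < N" "\<forall>i. count m2 i < N"
  shows "m1 = m2"
proof -
  obtain K where K: "set_mset m1 \<subseteq> {..K}" "set_mset m2 \<subseteq> {..K}"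
    by (rule bounded_mset)
  have "\<forall>i\<le>K. int (count m1 i) - int (count m2 i) = 0"
  proof (rule weighted_digits_eq_0)
    show "\<forall>i<K. \<bar>int (count m1 i) - int (count m2 i)\<bar> < int N"
    proof (intro allI impI)
      fix i :: nat
      assume "i < K"
      then have "count m1 i < N" "count m2 i < N"
        using assms(6,7) by auto
      then show "\<bar>int (count m1 i) - int (count m2 i)\<bar> < int N"
        by linarith
    qed
  qed (use assms pow_sum_eq_imp_digits_eq_0[OF assms(2,4,5) K] in auto)
  then show ?thesis
    using K by (intro mset_eq_if_count_eq_atMost) auto
qed

lemma borrow_free_unique:
  assumes "0 < D" "coprime N D" "r = of_nat N / of_nat D" "pow_sum r m1 = pow_sum r m2"
    "\<forall>i>0. count m1 i < D" "\<forall>i>0. count m2 i < D"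
  shows "m1 = m2"
proof -
  obtain K where K: "set_mset m1 \<subseteq> {..K}" "set_mset m2 \<subseteq> {..K}"
    by (rule bounded_mset)
  have "\<forall>i\<le>K. int (count m1 i) - int (count m2 i) = 0"
  proof (rule weighted_digits_eq_0_rev)
    show "\<forall>i>0. \<bar>int (count m1 i) - int (count m2 i)\<bar> < int D"
    proof (intro allI impI)
      fix i :: nat
      assume "0 < i"
      then have "count m1 i < D" "count m2 i < D"
        using assms(5,6) by auto
      then show "\<bar>int (count m1 i) - int (count m2 i)\<bar> < int D"
        by linarith
    qed
  qed (use assms pow_sum_eq_imp_digits_eq_0[OF assms(1,3,4) K] in auto)
  then show ?thesis
    using K by (intro mset_eq_if_count_eq_atMost) auto
qed

section \<open>Atoms and factorizations\<close>

lemma atoms_Sr_subset_powers: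
  assumes "0 < r"
  shows "atoms (Sr r) \<subseteq> range (\<lambda>i. r ^ i)"
proof
  fix a
  assume a: "a \<in> atoms (Sr r)"
  then obtain m where m: "a = pow_sum r m"
    unfolding atoms_def Sr_eq_range_pow_sum by auto
  with a have "m \<noteq> {#}"
    by (auto simp: atoms_def)
  then obtain i m' where m': "m = add_mset i m'"
    by (metis multiset_cases)
  have "pow_sum r m' = 0"
    using a m m' pow_sum_in_Sr[of r m'] power_in_Sr[of r i] assms unfolding atoms_def by auto
  then show "a \<in> range (\<lambda>i. r ^ i)"
    using m m' pow_sum_eq_0_iff[OF assms] by simp
qed

lemma power_ne_pow_sum_lower_powers:
  assumes "1 < D" "coprime N D" "r = of_nat N / of_nat D" "\<forall>k\<in>#m. k < i"
  shows "pow_sum r m \<noteq> r ^ i"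
proof
  assume "pow_sum r m = r ^ i"
  then have "cleared_sum (int N) (int D) i m = cleared_sum (int N) (int D) i {#i#}"
    using assms by (intro cleared_sum_eq) auto
  moreover have "int D dvd cleared_sum (int N) (int D) i m"
    unfolding cleared_sum_def using assms(4) by (intro dvd_sum_mset_image dvd_mult) simp
  ultimately have "int D dvd int N ^ i"
    by (simp add: cleared_sum_def)
  moreover have "coprime (int D) (int N ^ i)"
    using assms(2) by (simp add: coprime_commute)
  ultimately show False
    using assms(1) coprime_common_divisor[of "int D" "int N ^ i" "int D"] by simp
qed

lemma power_ne_pow_sum_higher_powers:
  assumes "0 < D" "1 < N" "coprime N D" "r = of_nat N / of_nat D" "\<forall>k\<in>#m. i < k"
  shows "pow_sum r m \<noteq> r ^ i"
proof
  assume "pow_sum r m = r ^ i"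
  obtain K where K: "set_mset m \<subseteq> {..K}" "set_mset {#i#} \<subseteq> {..K}"
    by (rule bounded_mset)
  have "cleared_sum (int N) (int D) K m = cleared_sum (int N) (int D) K {#i#}"
    using assms K \<open>pow_sum r m = r ^ i\<close> by (intro cleared_sum_eq) auto
  moreover have "int N ^ Suc i dvd cleared_sum (int N) (int D) K m"
    unfolding cleared_sum_def using assms(5)
    by (intro dvd_sum_mset_image dvd_mult2 le_imp_power_dvd) (auto simp: Suc_le_eq)
  ultimately have "int N ^ i * int N dvd int N ^ i * int D ^ (K - i)"
    by (simp add: cleared_sum_def power_Suc2)
  then have "int N dvd int D ^ (K - i)"
    using assms(2) by simp
  moreover have "coprime (int N) (int D ^ (K - i))"
    using assms(3) by simp
  ultimately show False
    using assms(2) coprime_common_divisor[of "int N" "int D ^ (K - i)" "int N"] by simp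
qed

lemma power_in_atoms_Sr:
  assumes "1 < N" "1 < D" "coprime N D" "r = of_nat N / of_nat D"
  shows "r ^ i \<in> atoms (Sr r)"
proof -
  have r: "0 < r" "r \<noteq> 1"
    using assms by (auto simp: coprime_iff_gcd_eq_1)
  have "b = 0 \<or> c = 0" if bc: "b \<in> Sr r" "c \<in> Sr r" "r ^ i = b + c" for b c
  proof (rule ccontr)
    assume "\<not> (b = 0 \<or> c = 0)"
    moreover obtain m1 m2 where "b = pow_sum r m1" "c = pow_sum r m2"
      using bc(1,2) unfolding Sr_eq_range_pow_sum by blast
    ultimately have "m1 \<noteq> {#}" "m2 \<noteq> {#}" "pow_sum r (m1 + m2) = r ^ i"
      using bc(3) by auto
    then have m: "pow_sum r (m1 + m2) = r ^ i" "2 \<le> size (m1 + m2)"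
      by (auto simp: Suc_le_eq simp flip: size_eq_0_iff_empty)
    have less: "r ^ k < r ^ i" if "k \<in># m1 + m2" for k
      using power_less_pow_sum[OF r(1) that m(2)] m(1) by simp
    show False
    proof (cases "1 < r")
      case True
      then have "\<forall>k\<in>#m1 + m2. k < i"
        using less power_less_imp_less_exp by blast
      then show False
        using power_ne_pow_sum_lower_powers[of D N r "m1 + m2" i] m(1) assms by auto
    next
      case False
      then have "r < 1"
        using r(2) by simp
      then have "\<forall>k\<in>#m1 + m2. i < k"
        using less power_strict_decreasing_iff[OF r(1)] by blast
      then show False
        using power_ne_pow_sum_higher_powers[of D N r "m1 + m2" i] m(1) assms by auto
    qed
  qed
  then show ?thesis
    unfolding atoms_def using power_in_Sr[of r i] r(1) by auto
qed

lemma atoms_Sr: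
  assumes "1 < N" "1 < D" "coprime N D" "r = of_nat N / of_nat D"
  shows "atoms (Sr r) = range (\<lambda>i. r ^ i)"
  using atoms_Sr_subset_powers[of r] power_in_atoms_Sr[OF assms] assms by auto

lemma ex_image_mset_eq: "set_mset M \<subseteq> range f \<Longrightarrow> \<exists>N. M = image_mset f N"
proof (induction M)
  case (add x M)
  then obtain N i where "M = image_mset f N" "x = f i"
    by auto
  then show ?case
    by (metis image_mset_add_mset)
qed simp

lemma Zf_Sr:
  assumes "atoms (Sr r) = range (\<lambda>i. r ^ i)"
  shows "Zf (Sr r) x = image_mset (\<lambda>i. r ^ i) ` {m. pow_sum r m = x}"
proof
  show "Zf (Sr r) x \<subseteq> image_mset (\<lambda>i. r ^ i) ` {m. pow_sum r m = x}"
  proof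
    fix z
    assume z: "z \<in> Zf (Sr r) x"
    then obtain m where "z = image_mset (\<lambda>i. r ^ i) m"
      using ex_image_mset_eq[of z "\<lambda>i. r ^ i"] assms unfolding Zf_def by auto
    with z show "z \<in> image_mset (\<lambda>i. r ^ i) ` {m. pow_sum r m = x}"
      by (auto simp: Zf_def pow_sum_def)
  qed
qed (use assms in \<open>auto simp: Zf_def pow_sum_def\<close>)

lemma Lf_Sr:
  assumes "atoms (Sr r) = range (\<lambda>i. r ^ i)"
  shows "Lf (Sr r) x = size ` {m. pow_sum r m = x}"
  unfolding Lf_def Zf_Sr[OF assms] image_image by simp

lemma Zf_nonempty: "atomic S \<Longrightarrow> x \<in> S \<Longrightarrow> Zf S x \<noteq> {}"
proof (cases "x = 0")
  case True
  then have "{#} \<in> Zf S x"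
    by (simp add: Zf_def)
  then show ?thesis
    by blast
qed (simp add: atomic_def)

lemma rat_eq_nat_fraction:
  assumes "0 < r"
  obtains N D where "0 < N" "0 < D" "coprime N D" "r = of_nat N / of_nat D"
    "numr r = int N" "denr r = int D"
proof -
  have q: "quotient_of r = (numr r, denr r)"
    by (simp add: numr_def denr_def)
  have r: "r = of_int (numr r) / of_int (denr r)" and "0 < denr r"
    using quotient_of_div[OF q] quotient_of_denom_pos[OF q] by simp_all
  moreover have "0 < numr r"
    using assms \<open>0 < denr r\<close> by (subst (asm) r) (simp add: zero_less_divide_iff)
  moreover have "coprime (numr r) (denr r)"
    using quotient_of_coprime[OF q] .
  ultimately show ?thesis
    using that[of "nat (numr r)" "nat (denr r)"] by (simp add: coprime_int_iff[symmetric])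
qed

lemma numr_less_denr: "0 < r \<Longrightarrow> r < 1 \<Longrightarrow> numr r < denr r"
  by (rule rat_eq_nat_fraction) (auto simp: divide_less_eq)

lemma denr_less_numr: "1 < r \<Longrightarrow> denr r < numr r"
  by (rule rat_eq_nat_fraction[of r]) (auto simp: less_divide_eq)

lemma not_atomic_Sr_unit_fraction:
  assumes "1 < D"
  shows "\<not> atomic (Sr (1 / of_nat D))"
proof
  let ?r = "1 / of_nat D :: rat"
  assume atomic: "atomic (Sr ?r)"
  have "?r ^ i \<notin> atoms (Sr ?r)" for i
  proof
    assume atom: "?r ^ i \<in> atoms (Sr ?r)"
    have "?r ^ i = ?r ^ Suc i + pow_sum ?r (replicate_mset (D - 1) (Suc i))"
      using assms by (simp add: of_nat_diff field_simps)
    then have "?r ^ Suc i = 0 \<or> pow_sum ?r (replicate_mset (D - 1) (Suc i)) = 0"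
      using atom power_in_Sr pow_sum_in_Sr unfolding atoms_def by blast
    then show False
      using assms by simp
  qed
  then have "atoms (Sr ?r) = {}"
    using atoms_Sr_subset_powers[of ?r] assms by auto
  moreover have "Zf (Sr ?r) 1 \<noteq> {}"
    using atomic power_in_Sr[of ?r 0] unfolding atomic_def by auto
  ultimately show False
    by (auto simp: Zf_def)
qed

lemma atoms_Sr_not_Nats:
  assumes "0 < r" "r \<notin> \<nat>" "atomic (Sr r)"
  obtains N D where "1 < N" "1 < D" "coprime N D" "r = of_nat N / of_nat D"
    "numr r = int N" "denr r = int D" "atoms (Sr r) = range (\<lambda>i. r ^ i)"
proof -
  obtain N D where ND: "0 < N" "0 < D" "coprime N D" "r = of_nat N / of_nat D"
    "numr r = int N" "denr r = int D"
    using rat_eq_nat_fraction[OF assms(1)] .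
  have "D \<noteq> 1"
    using ND(4) assms(2) by auto
  moreover have "N \<noteq> 1"
  proof
    assume "N = 1"
    with ND(4) have "r = 1 / of_nat D"
      by simp
    with assms(3) \<open>D \<noteq> 1\<close> ND(2) show False
      using not_atomic_Sr_unit_fraction[of D] by simp
  qed
  ultimately show ?thesis
    using that ND atoms_Sr[of N D r] by simp
qed

section \<open>Integral base\<close>

lemma Sr_Nats: "r \<in> \<nat> \<Longrightarrow> Sr r = \<nat>"
proof
  assume r: "r \<in> \<nat>"
  then obtain k where k: "r = of_nat k"
    by (auto elim: Nats_cases)
  have "pow_sum r m \<in> \<nat>" for m
    by (induction m) (simp_all add: k flip: of_nat_power)
  then show "Sr r \<subseteq> \<nat>"
    unfolding Sr_eq_range_pow_sum by auto
  show "\<nat> \<subseteq> Sr r"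
  proof
    fix x :: rat
    assume "x \<in> \<nat>"
    then obtain t where "x = pow_sum r (replicate_mset t 0)"
      by (auto elim: Nats_cases)
    then show "x \<in> Sr r"
      unfolding Sr_eq_range_pow_sum by (rule range_eqI)
  qed
qed

lemma atoms_Nats: "atoms (\<nat> :: rat set) = {1}"
proof -
  have "a = 1" if "a \<in> atoms \<nat>" for a :: rat
  proof -
    from that obtain k where k: "a = of_nat k" "k \<noteq> 0"
      by (auto simp: atoms_def elim: Nats_cases)
    have "a = 1 + of_nat (k - 1)"
      using k by (simp add: of_nat_diff)
    moreover have "\<forall>b\<in>\<nat>. \<forall>c\<in>\<nat>. a = b + c \<longrightarrow> b = 0 \<or> c = 0"
      using that by (simp add: atoms_def)
    ultimately have "of_nat (k - 1) = (0 :: rat)"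
      by (metis Nats_1 of_nat_in_Nats one_neq_zero)
    then show ?thesis
      using k by simp
  qed
  moreover have "b = 0 \<or> c = 0" if "b \<in> \<nat>" "c \<in> \<nat>" "1 = b + c" for b c :: rat
    using that by (auto elim!: Nats_cases simp flip: of_nat_add)
  then have "(1 :: rat) \<in> atoms \<nat>"
    by (simp add: atoms_def)
  ultimately show ?thesis
    by blast
qed

lemma Zf_Nats: "Zf \<nat> (of_nat t :: rat) = {replicate_mset t 1}"
proof -
  have "z = replicate_mset t 1" if "set_mset z \<subseteq> {1}" "sum_mset z = of_nat t" for z :: "rat multiset"
  proof -
    have z: "z = replicate_mset (size z) 1"
      using that(1) by (rule set_mset_subset_singletonD)
    then have "sum_mset z = of_nat (size z)"
      by (metis sum_mset_replicate_mset mult_1_right)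
    with z that(2) show ?thesis
      by simp
  qed
  then show ?thesis
    by (auto simp: Zf_def atoms_Nats split: if_splits)
qed

lemma factorization_Sr_Nats:
  assumes "r \<in> \<nat>" "x \<in> Sr r"
  obtains t where "Zf (Sr r) x = {replicate_mset t 1}" "Lf (Sr r) x = {t}"
proof -
  obtain t where "x = of_nat t"
    using assms Sr_Nats by (auto elim: Nats_cases)
  then show ?thesis
    using that[of t] Sr_Nats[OF assms(1)] by (simp add: Zf_Nats Lf_def)
qed

section \<open>Sets of lengths\<close>

lemma dvd_diff_obtain_nat_multiple:
  fixes a x y :: int
  assumes "a dvd y - x" "x \<le> y" "0 < a"
  obtains k :: nat where "y = x + int k * a"
proof -
  obtain t where t: "y - x = a * t"
    using assms(1) by (auto elim: dvdE)
  with assms(2) have "0 \<le> a * t"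
    by simp
  with assms(3) have "0 \<le> t"
    by (simp add: zero_le_mult_iff)
  with t show ?thesis
    using that[of "nat t"] by (simp add: algebra_simps)
qed

lemma borrow_free_if_shortest:
  assumes "0 < D" "r = of_nat N / of_nat D" "N < D"
    "\<And>m'. pow_sum r m' = pow_sum r m \<Longrightarrow> size m \<le> size m'"
  shows "\<forall>i>0. count m i < D"
proof (intro allI impI)
  fix i :: nat
  assume "0 < i"
  then obtain j where i: "i = Suc j"
    using gr0_conv_Suc by blast
  show "count m i < D"
  proof (rule ccontr)
    assume "\<not> count m i < D"
    then have "D \<le> count m (Suc j)"
      using i by simp
    then have "size m \<le> size (borrow N D j m)"
      using assms(4) pow_sum_borrow[OF assms(1,2)] by blast
    with \<open>D \<le> count m (Suc j)\<close> show False
      using size_borrow[OF assms(1,2)] assms(3) by fastforce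
  qed
qed

lemma carry_free_if_shortest:
  assumes "0 < D" "r = of_nat N / of_nat D" "D < N"
    "\<And>m'. pow_sum r m' = pow_sum r m \<Longrightarrow> size m \<le> size m'"
  shows "\<forall>i. count m i < N"
proof (rule ccontr)
  assume "\<not> (\<forall>i. count m i < N)"
  then obtain j where "N \<le> count m j"
    by (auto simp: not_less)
  then have "size m \<le> size (carry N D j m)"
    using assms(4) pow_sum_carry[OF assms(1,2)] by blast
  with \<open>N \<le> count m j\<close> show False
    using size_carry[OF assms(1,2)] assms(3) by fastforce
qed

lemma borrow_until_borrow_free:
  assumes "0 < D" "r = of_nat N / of_nat D" "N < D" "\<not> (\<forall>i>0. count m i < D)"
  shows "\<exists>w. (\<forall>i>0. count w i < D) \<and> pow_sum r w = pow_sum r m \<and> (\<exists>j. N \<le> count w j)"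
  using assms(4)
proof (induction "size m" arbitrary: m rule: less_induct)
  case less
  then obtain j where j: "D \<le> count m (Suc j)"
    by (metis gr0_conv_Suc not_less)
  let ?m = "borrow N D j m"
  have m: "pow_sum r ?m = pow_sum r m" "size ?m < size m" "N \<le> count ?m j"
    using pow_sum_borrow[OF assms(1,2) j] size_borrow[OF assms(1,2) j] count_borrow[OF assms(1,2) j]
      assms(3) by simp_all
  show ?case
  proof (cases "\<forall>i>0. count ?m i < D")
    case True
    then show ?thesis
      using m by blast
  next
    case False
    then show ?thesis
      using less.hyps[OF m(2) False] m(1) by auto
  qed
qed

lemma carry_lengths:
  assumes "0 < D" "r = of_nat N / of_nat D" "N \<le> D" "N \<le> count m j"
  shows "\<exists>m'. pow_sum r m' = pow_sum r m \<and> size m' = size m + k * (D - N)"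
  using assms(4)
proof (induction k arbitrary: m j)
  case (Suc k)
  let ?m = "carry N D j m"
  have "N \<le> count ?m (Suc j)"
    using count_carry[OF assms(1,2) Suc.prems] assms(3) by simp
  then obtain m' where "pow_sum r m' = pow_sum r ?m" "size m' = size ?m + k * (D - N)"
    using Suc.IH by blast
  then show ?case
    using pow_sum_carry[OF assms(1,2) Suc.prems] size_carry[OF assms(1,2) Suc.prems] assms(3)
    by (intro exI[of _ m']) simp
qed auto

lemma carry_until_carry_free:
  assumes "0 < D" "r = of_nat N / of_nat D" "D < N"
  shows "\<exists>w q. (\<forall>i. count w i < N) \<and> pow_sum r w = pow_sum r m \<and> size m = size w + q * (N - D)
    \<and> (\<forall>k\<le>q. size w + k * (N - D) \<in> size ` {m'. pow_sum r m' = pow_sum r m})"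
proof (induction "size m" arbitrary: m rule: less_induct)
  case less
  show ?case
  proof (cases "\<forall>i. count m i < N")
    case True
    then show ?thesis
      by (intro exI[of _ m] exI[of _ 0]) auto
  next
    case False
    then obtain j where j: "N \<le> count m j"
      by (auto simp: not_less)
    let ?m = "carry N D j m"
    have m: "pow_sum r ?m = pow_sum r m" "size ?m + (N - D) = size m"
      using pow_sum_carry[OF assms(1,2) j] size_carry[OF assms(1,2) j] assms(3) by simp_all
    then have "size ?m < size m"
      using assms(3) by simp
    from less.hyps[OF this] obtain w q where w: "\<forall>i. count w i < N" "pow_sum r w = pow_sum r m"
      "size ?m = size w + q * (N - D)"
      "\<forall>k\<le>q. size w + k * (N - D) \<in> size ` {m'. pow_sum r m' = pow_sum r m}"
      unfolding m(1) by blast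
    have "size w + k * (N - D) \<in> size ` {m'. pow_sum r m' = pow_sum r m}" if "k \<le> Suc q" for k
    proof (cases "k = Suc q")
      case True
      then show ?thesis
        using w(3) m(2) by (auto intro: image_eqI[of _ _ m])
    qed (use w(4) that in simp)
    then show ?thesis
      using w m(2) by (intro exI[of _ w] exI[of _ "Suc q"]) auto
  qed
qed

lemma lengths_below_one:
  assumes "0 < D" "coprime N D" "r = of_nat N / of_nat D" "N < D"
    "m1 \<noteq> m2" "pow_sum r m1 = x" "pow_sum r m2 = x"
  defines "L \<equiv> size ` {m. pow_sum r m = x}"
  shows "int ` L = {int (Inf L) + int k * (int D - int N) | k. True}"
proof -
  have "Inf L \<in> L"
    using assms(6) unfolding L_def by (intro Inf_nat_def1) auto
  then obtain m0 where m0: "pow_sum r m0 = x" "size m0 = Inf L"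
    unfolding L_def by auto
  have shortest: "size m0 \<le> size m" if "pow_sum r m = x" for m
    using that m0(2) by (simp add: L_def cInf_lower)
  then have m0_free: "\<forall>i>0. count m0 i < D"
    using borrow_free_if_shortest[OF assms(1,3,4)] m0(1) by metis
  obtain m where "pow_sum r m = x" "\<not> (\<forall>i>0. count m i < D)"
    using borrow_free_unique[OF assms(1-3)] assms(5-7) by metis
  then obtain w j where "\<forall>i>0. count w i < D" "pow_sum r w = x" "N \<le> count w j"
    using borrow_until_borrow_free[OF assms(1,3,4)] by metis
  moreover from this have "w = m0"
    using borrow_free_unique[OF assms(1-3)] m0(1) m0_free by metis
  ultimately have carry: "N \<le> count m0 j"
    by simp
  show ?thesis
  proof (intro equalityI subsetI)
    fix y
    assume "y \<in> int ` L"
    then obtain m where m: "pow_sum r m = x" "y = int (size m)"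
      by (auto simp: L_def)
    have "[int (size m) = int (size m0)] (mod (int N - int D))"
      using pow_sum_eq_imp_size_cong[OF assms(1-3)] m(1) m0(1) by simp
    then have "int N - int D dvd int (size m) - int (size m0)"
      by (simp add: cong_iff_dvd_diff)
    then have "int D - int N dvd int (size m) - int (size m0)"
      by (metis minus_dvd_iff minus_diff_eq)
    then obtain k where "int (size m) = int (size m0) + int k * (int D - int N)"
      using shortest[OF m(1)] assms(4) by (elim dvd_diff_obtain_nat_multiple) simp_all
    then show "y \<in> {int (Inf L) + int k * (int D - int N) | k. True}"
      using m(2) m0(2) by auto
  next
    fix y
    assume "y \<in> {int (Inf L) + int k * (int D - int N) | k. True}"
    then obtain k where y: "y = int (Inf L) + int k * (int D - int N)"
      by blast
    obtain m where "pow_sum r m = x" "size m = size m0 + k * (D - N)"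
      using carry_lengths[OF assms(1,3) _ carry, of k] assms(4) m0(1) by auto
    then show "y \<in> int ` L"
      using y m0(2) assms(4) unfolding L_def by (auto simp: of_nat_diff image_iff)
  qed
qed

lemma finite_lengths:
  assumes "1 \<le> r"
  shows "finite (size ` {m. pow_sum r m = x})"
proof -
  have "size m \<le> nat \<lceil>pow_sum r m\<rceil>" for m
    using ceiling_mono[OF size_le_pow_sum[OF assms, of m]] by (simp add: le_nat_iff)
  then have "size ` {m. pow_sum r m = x} \<subseteq> {..nat \<lceil>x\<rceil>}"
    by auto
  then show ?thesis
    using finite_subset by blast
qed

lemma lengths_above_one:
  assumes "0 < D" "coprime N D" "r = of_nat N / of_nat D" "D < N" "pow_sum r m1 = x"
  defines "L \<equiv> size ` {m. pow_sum r m = x}"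
  obtains q where "Max L = Min L + q * (N - D)"
    "int ` L = {int (Min L) + int k * (int N - int D) | k. k \<le> q}"
proof -
  have L: "finite L" "L \<noteq> {}"
    unfolding L_def using assms(1,3-5) finite_lengths[of r] by auto
  obtain m0 where m0: "pow_sum r m0 = x" "size m0 = Min L"
    using Min_in[OF L] unfolding L_def by auto
  obtain mM where mM: "pow_sum r mM = x" "size mM = Max L"
    using Max_in[OF L] unfolding L_def by auto
  have in_L: "size m \<in> L" if "pow_sum r m = x" for m
    using that unfolding L_def by simp
  have "\<forall>i. count m0 i < N"
    using carry_free_if_shortest[OF assms(1,3,4)] m0 in_L L(1) by (metis Min_le)
  moreover obtain w q where w: "\<forall>i. count w i < N" "pow_sum r w = x" "size mM = size w + q * (N - D)"
    "\<forall>k\<le>q. size w + k * (N - D) \<in> L"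
    using carry_until_carry_free[OF assms(1,3,4), of mM] mM(1) unfolding L_def by auto
  ultimately have "w = m0"
    using carry_free_unique[OF _ assms(1-3)] assms(1,4) m0(1) by simp
  with w(3) mM(2) m0(2) have Max: "Max L = Min L + q * (N - D)"
    by simp
  have "int ` L = {int (Min L) + int k * (int N - int D) | k. k \<le> q}"
  proof (intro equalityI subsetI)
    fix y
    assume "y \<in> int ` L"
    then obtain m where m: "pow_sum r m = x" "y = int (size m)"
      by (auto simp: L_def)
    have "[int (size m) = int (size m0)] (mod (int N - int D))"
      using pow_sum_eq_imp_size_cong[OF assms(1-3)] m(1) m0(1) by simp
    then have "int N - int D dvd int (size m) - int (size m0)"
      by (simp add: cong_iff_dvd_diff)
    moreover have "size m0 \<le> size m" "size m \<le> Max L"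
      using m0(2) in_L[OF m(1)] L(1) by simp_all
    ultimately obtain k where k: "int (size m) = int (size m0) + int k * (int N - int D)"
      using assms(4) by (elim dvd_diff_obtain_nat_multiple) simp_all
    moreover have "int (size m) \<le> int (size m0 + q * (N - D))"
      using \<open>size m \<le> Max L\<close> Max m0(2) by (simp only: of_nat_le_iff)
    then have "int (size m) \<le> int (size m0) + int q * (int N - int D)"
      using assms(4) by (simp add: of_nat_diff)
    ultimately have "k \<le> q"
      using assms(4) by simp
    with k m(2) m0(2) show "y \<in> {int (Min L) + int k * (int N - int D) | k. k \<le> q}"
      by auto
  next
    fix y
    assume "y \<in> {int (Min L) + int k * (int N - int D) | k. k \<le> q}"
    then obtain k where "k \<le> q" "y = int (Min L) + int k * (int N - int D)"
      by blast
    with w(4) \<open>w = m0\<close> m0(2) assms(4) show "y \<in> int ` L"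
      by (force simp: of_nat_diff)
  qed
  with Max show ?thesis
    using that by blast
qed

lemma arith_prog_singleton: "arith_prog {a} d"
  unfolding arith_prog_def by (intro exI[of _ a] disjI1 exI[of _ 1]) auto

lemma arith_prog_infinite: "arith_prog {a + int k * d | k. True} d"
  unfolding arith_prog_def by blast

lemma arith_prog_upto: "arith_prog {a + int k * d | k. k \<le> q} d"
  unfolding arith_prog_def by (intro exI[of _ a] disjI1 exI[of _ "Suc q"]) (simp add: less_Suc_eq_le)

lemma arith_prog_Lf_unique_factorization: "Zf S x = {z} \<Longrightarrow> arith_prog (int ` Lf S x) d"
  by (simp add: Lf_def arith_prog_singleton)

lemma progression_upto_eq:
  fixes d :: int
  assumes "0 < d" "M = m + q * nat d"
  shows "{int m + int k * d | k. of_nat k \<le> (of_nat M - of_nat m) / (of_int d :: rat)}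
    = {int m + int k * d | k. k \<le> q}"
proof -
  have "(of_nat M - of_nat m) / (of_int d :: rat) = of_nat q"
    using assms by (simp add: of_nat_mult)
  then show ?thesis
    by simp
qed

lemma lengths_Sr_below_one:
  assumes "0 < r" "r < 1" "atomic (Sr r)" "z1 \<in> Zf (Sr r) x" "z2 \<in> Zf (Sr r) x" "z1 \<noteq> z2"
  shows "int ` Lf (Sr r) x = {int (Inf (Lf (Sr r) x)) + int k * (denr r - numr r) | k::nat. True}"
proof -
  have "r \<notin> \<nat>"
  proof
    assume "r \<in> \<nat>"
    then obtain k where "r = of_nat k"
      by (auto elim: Nats_cases)
    with assms(1,2) show False
      by simp
  qed
  then obtain N D where ND: "coprime N D" "r = of_nat N / of_nat D" "1 < D"
    "numr r = int N" "denr r = int D" and atoms: "atoms (Sr r) = range (\<lambda>i. r ^ i)"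
    using atoms_Sr_not_Nats assms(1,3) by metis
  then have "N < D"
    using assms(2) by (simp add: divide_less_eq)
  obtain m1 m2 where "z1 = image_mset (\<lambda>i. r ^ i) m1" "pow_sum r m1 = x"
    "z2 = image_mset (\<lambda>i. r ^ i) m2" "pow_sum r m2 = x"
    using assms(4,5) unfolding Zf_Sr[OF atoms] by auto
  moreover from this have "m1 \<noteq> m2"
    using assms(6) by auto
  ultimately show ?thesis
    using lengths_below_one[OF _ ND(1,2) \<open>N < D\<close>] ND unfolding Lf_Sr[OF atoms] by simp
qed

lemma lengths_Sr_above_one:
  assumes "1 < r" "r \<notin> \<nat>" "x \<in> Sr r"
  obtains q where "Max (Lf (Sr r) x) = Min (Lf (Sr r) x) + q * nat (numr r - denr r)"
    "int ` Lf (Sr r) x = {int (Min (Lf (Sr r) x)) + int k * (numr r - denr r) | k. k \<le> q}"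
proof -
  have "0 < r"
    using assms(1) by simp
  then obtain N D where ND: "0 < N" "0 < D" "coprime N D" "r = of_nat N / of_nat D"
    "numr r = int N" "denr r = int D"
    by (rule rat_eq_nat_fraction)
  have "D < N"
    using ND(2,4) assms(1) by (simp add: less_divide_eq)
  moreover have "D \<noteq> 1"
    using ND(4) assms(2) by auto
  ultimately have atoms: "atoms (Sr r) = range (\<lambda>i. r ^ i)"
    using atoms_Sr[OF _ _ ND(3,4)] ND(2) by simp
  obtain m where "pow_sum r m = x"
    using assms(3) unfolding Sr_eq_range_pow_sum by auto
  then obtain q where "Max (size ` {m. pow_sum r m = x}) = Min (size ` {m. pow_sum r m = x}) + q * (N - D)"
    "int ` size ` {m. pow_sum r m = x}
      = {int (Min (size ` {m. pow_sum r m = x})) + int k * (int N - int D) | k. k \<le> q}"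
    by (rule lengths_above_one[OF ND(2-4) \<open>D < N\<close>])
  moreover have "numr r - denr r = int N - int D" "nat (numr r - denr r) = N - D"
    using ND(5,6) \<open>D < N\<close> by simp_all
  ultimately show ?thesis
    using that[of q] unfolding Lf_Sr[OF atoms] by simp
qed

lemma lengths_Sr_above_one_bounded:
  assumes "1 < r" "r \<notin> \<nat>" "x \<in> Sr r"
  shows "int ` Lf (Sr r) x = {int (Min (Lf (Sr r) x)) + int k * (numr r - denr r) | k::nat.
    of_nat k \<le> (of_nat (Max (Lf (Sr r) x)) - of_nat (Min (Lf (Sr r) x))) / (of_int (numr r - denr r) :: rat)}"
proof -
  obtain q where "Max (Lf (Sr r) x) = Min (Lf (Sr r) x) + q * nat (numr r - denr r)"
    "int ` Lf (Sr r) x = {int (Min (Lf (Sr r) x)) + int k * (numr r - denr r) | k. k \<le> q}"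
    by (rule lengths_Sr_above_one[OF assms])
  moreover have "0 < numr r - denr r"
    using denr_less_numr[OF assms(1)] by simp
  ultimately show ?thesis
    by (simp add: progression_upto_eq)
qed

lemma arith_prog_Lf_Sr:
  assumes "0 < r" "atomic (Sr r)" "x \<in> Sr r"
  shows "arith_prog (int ` Lf (Sr r) x) \<bar>numr r - denr r\<bar>"
proof -
  consider "r \<in> \<nat>" | "1 < r" "r \<notin> \<nat>" | "r < 1"
    by (metis Nats_1 linorder_neqE_linordered_idom)
  then show ?thesis
  proof cases
    case 1
    obtain t where "Lf (Sr r) x = {t}"
      by (rule factorization_Sr_Nats[OF 1 assms(3)])
    then show ?thesis
      by (simp add: arith_prog_singleton)
  next
    case 2
    obtain q where "int ` Lf (Sr r) x = {int (Min (Lf (Sr r) x)) + int k * (numr r - denr r) | k. k \<le> q}"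
      by (rule lengths_Sr_above_one[OF 2 assms(3)])
    moreover have "\<bar>numr r - denr r\<bar> = numr r - denr r"
      using denr_less_numr[OF 2(1)] by simp
    ultimately show ?thesis
      by (simp add: arith_prog_upto)
  next
    case 3
    show ?thesis
    proof (cases "\<exists>z1\<in>Zf (Sr r) x. \<exists>z2\<in>Zf (Sr r) x. z1 \<noteq> z2")
      case True
      then obtain z1 z2 where "z1 \<in> Zf (Sr r) x" "z2 \<in> Zf (Sr r) x" "z1 \<noteq> z2"
        by blast
      then have "int ` Lf (Sr r) x = {int (Inf (Lf (Sr r) x)) + int k * (denr r - numr r) | k. True}"
        by (rule lengths_Sr_below_one[OF assms(1) 3 assms(2)])
      moreover have "\<bar>numr r - denr r\<bar> = denr r - numr r"
        using numr_less_denr[OF assms(1) 3] by simp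
      ultimately show ?thesis
        using arith_prog_infinite[of "int (Inf (Lf (Sr r) x))" "denr r - numr r"] by simp
    next
      case False
      then obtain z where "Zf (Sr r) x = {z}"
        using Zf_nonempty[OF assms(2,3)] by blast
      then show ?thesis
        by (rule arith_prog_Lf_unique_factorization)
    qed
  qed
qed

theorem theorem3p3:
  fixes r :: rat
  assumes "r > 0" and "atomic (Sr r)"
  shows
   "(r < 1 \<longrightarrow> (\<forall>x\<in>Sr r. (\<exists>z1\<in>Zf (Sr r) x. \<exists>z2\<in>Zf (Sr r) x. z1 \<noteq> z2) \<longrightarrow>
        int ` Lf (Sr r) x = {int (Inf (Lf (Sr r) x)) + int k * (denr r - numr r) | k::nat. True}))
  \<and> (r \<in> \<nat> \<longrightarrow> (\<forall>x\<in>Sr r. card (Zf (Sr r) x) = 1 \<and> card (Lf (Sr r) x) = 1))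
  \<and> (r > 1 \<and> r \<notin> \<nat> \<longrightarrow> (\<forall>x\<in>Sr r. (\<exists>z1\<in>Zf (Sr r) x. \<exists>z2\<in>Zf (Sr r) x. z1 \<noteq> z2) \<longrightarrow>
        int ` Lf (Sr r) x = {int (Min (Lf (Sr r) x)) + int k * (numr r - denr r) | k::nat.
            of_nat k \<le> (of_nat (Max (Lf (Sr r) x)) - of_nat (Min (Lf (Sr r) x))) / (of_int (numr r - denr r) :: rat)}))
  \<and> (\<forall>x\<in>Sr r. arith_prog (int ` Lf (Sr r) x) \<bar>numr r - denr r\<bar>)"
  apply (intro conjI impI ballI)
  subgoal
    using lengths_Sr_below_one[OF assms(1) _ assms(2)] by blast
  subgoal
    by (elim factorization_Sr_Nats) auto
  subgoal
    by (elim factorization_Sr_Nats) auto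
  subgoal
    using lengths_Sr_above_one_bounded by blast
  subgoal
    by (rule arith_prog_Lf_Sr[OF assms])
  done

end
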